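(* Let $A$ be a word-topic matrix, $\delta\ge0$, $B$ a $\delta$-biased minimum variance inverse of $A$, and let $x^*\in\mathcal{S}_k$ be $r$-sparse. Let $\epsilon>4\delta r$ and suppose $n\ge 64\,\lambda_\delta(A)^2r^2\log k/\epsilon^2$. If $y$ is a document of $n$ words generated from $x^*$, then with probability at least $1-2/k$ the output $x$ of the Thresholded Linear Inverse algorithm on input $(y,B)$ satisfies $\|x-x^*\|_1\le\epsilon$.
   Context: A word-topic matrix is a matrix $A\in\mathbb{R}^{D\times k}$ with nonnegative entries whose columns each sum to $1$. $\mathcal{S}_k=\{z\in\mathbb{R}^k_{\ge0}:\sum_i z_i=1\}$. A document of $n$ words generated from $x\in\mathcal{S}_k$ consists of words drawn i.i.d. from the categorical distribution on $[D]$ with probabilities $Ax$; its count vector $y\in\mathbb{R}^D$ records how many times each word occurs. For a matrix $M$, $\|M\|_{\max}=\max_{i,j}|M_{ij}|$. $\lambda_\delta(A)$ is the optimal value of: minimize $\|B\|_{\max}$ over $B\in\mathbb{R}^{k\times D}$ subject to $\|BA-I_k\|_{\max}\le\delta$; a $\delta$-biased minimum variance inverse is a matrix $B$ with $\|BA-I_k\|_{\max}\le\delta$ and $\|B\|_{\max}=\lambda_\delta(A)$. The Thresholded Linear Inverse algorithm, given $y$ and $B$: computes $\hat x=\frac1n By$; sets $\tau=2\lambda_\delta(A)\sqrt{(\log k)/n}+\delta$; outputs $x\in\mathbb{R}^k$ with $x_i=0$ if $\hat x_i<\tau$ and $x_i=\hat x_i$ otherwise. A vector is $r$-sparse if it has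 at most $r$ nonzero entries. *)

theory Defs
  imports "HOL-Analysis.Analysis" "HOL-Probability.Probability"
begin

text \<open>Topics are indexed by the finite type 'k (so k = CARD('k)),
  words by the finite type 'd (so D = CARD('d)).
  A word-topic matrix A has D rows and k columns: A :: real^'k^'d.\<close>

definition max_norm :: "real^'n::finite^'m::finite \<Rightarrow> real" where
  "max_norm M = Max {\<bar>M $ i $ j\<bar> | i j. True}"

definition word_topic :: "real^'k::finite^'d::finite \<Rightarrow> bool" where
  "word_topic A \<longleftrightarrow> (\<forall>i j. A $ i $ j \<ge> 0) \<and> (\<forall>j. (\<Sum>i\<in>UNIV. A $ i $ j) = 1)"

definition topic_simplex :: "(real^'k::finite) set" where
  "topic_simplex = {z. (\<forall>i. z $ i \<ge> 0) \<and> (\<Sum>i\<in>UNIV. z $ i) = 1}"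

definition lambda_delta :: "real^'k::finite^'d::finite \<Rightarrow> real \<Rightarrow> real" where
  "lambda_delta A \<delta> =
     Inf {max_norm B | B :: real^'d^'k. max_norm (B ** A - mat 1) \<le> \<delta>}"

definition min_var_inverse :: "real^'k::finite^'d::finite \<Rightarrow> real \<Rightarrow> real^'d^'k \<Rightarrow> bool" where
  "min_var_inverse A \<delta> B \<longleftrightarrow>
     max_norm (B ** A - mat 1) \<le> \<delta> \<and> max_norm B = lambda_delta A \<delta>"

definition sparse :: "nat \<Rightarrow> real^'k::finite \<Rightarrow> bool" where
  "sparse r z \<longleftrightarrow> card {i. z $ i \<noteq> 0} \<le> r"

definition word_dist :: "real^'k::finite^'d::finite \<Rightarrow> real^'k \<Rightarrow> 'd pmf" where
  "word_dist A x = embed_pmf (\<lambda>w. (A *v x) $ w)"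

definition document :: "nat \<Rightarrow> real^'k::finite^'d::finite \<Rightarrow> real^'k \<Rightarrow> (nat \<Rightarrow> 'd) pmf" where
  "document n A x = Pi_pmf {..<n} undefined (\<lambda>_. word_dist A x)"

definition count_vec :: "nat \<Rightarrow> (nat \<Rightarrow> 'd::finite) \<Rightarrow> real^'d" where
  "count_vec n doc = (\<chi> w. real (card {i. i < n \<and> doc i = w}))"

definition TLI :: "real^'k::finite^'d::finite \<Rightarrow> real \<Rightarrow> nat \<Rightarrow> real^'d \<Rightarrow> real^'d^'k \<Rightarrow> real^'k" where
  "TLI A \<delta> n y B =
     (let xh = (1 / real n) *\<^sub>R (B *v y);
          \<tau> = 2 * lambda_delta A \<delta> * sqrt (ln (real CARD('k)) / real n) + \<delta>
      in \<chi> i. if xh $ i < \<tau> then 0 else xh $ i)"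

definition l1_norm :: "real^'k::finite \<Rightarrow> real" where
  "l1_norm z = (\<Sum>i\<in>UNIV. \<bar>z $ i\<bar>)"

end

theory Submission
  imports Defs
begin

text \<open>Each coordinate of the unthresholded estimate \<open>(1/n) B y\<close> is an average of \<open>n\<close>
  i.i.d. terms bounded by \<open>\<lambda> = \<lambda>\<^sub>\<delta>(A)\<close> with mean \<open>(B A x\<^sup>*)\<^sub>i\<close>, which lies within \<open>\<delta>\<close> of
  \<open>x\<^sup>*\<^sub>i\<close>. Hoeffding's inequality and a union bound over the \<open>k\<close> coordinates show that with
  probability at least \<open>1 - 2/k\<close> every coordinate is within \<open>t = 2\<lambda>\<surd>(log k / n)\<close> of its
  mean. On that event thresholding at \<open>t + \<delta>\<close> kills every coordinate outside the support of
  \<open>x\<^sup>*\<close> and moves each of the at most \<open>r\<close> others by at most \<open>2(t + \<delta>)\<close>, and the sample size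
  bound makes \<open>2r(t + \<delta>) \<le> \<epsilon>\<close>.\<close>

lemma abs_entry_le_max_norm: "\<bar>M $ i $ j\<bar> \<le> max_norm (M :: real^'n::finite^'m::finite)"
proof -
  have "{\<bar>M $ i $ j\<bar> | i j. True} = (\<lambda>(i, j). \<bar>M $ i $ j\<bar>) ` UNIV" by auto
  then have "finite {\<bar>M $ i $ j\<bar> | i j. True}" by simp
  then show ?thesis unfolding max_norm_def by (intro Max_ge) auto
qed

lemma sparse_simplex_ge_1:
  assumes "x \<in> topic_simplex" "sparse r x"
  shows "r \<ge> 1"
proof (rule ccontr)
  assume "\<not> r \<ge> 1"
  then have "r = 0" by simp
  with assms(2) have "{i. x $ i \<noteq> 0} = {}" by (simp add: sparse_def)
  then have "(\<Sum>i\<in>UNIV. x $ i) = 0" by auto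
  with assms(1) show False by (simp add: topic_simplex_def)
qed

lemma pmf_word_dist:
  assumes "word_topic A" "x \<in> topic_simplex"
  shows "pmf (word_dist A x) w = (A *v x) $ w"
proof -
  have nonneg: "0 \<le> (A *v x) $ w" for w
    using assms unfolding word_topic_def topic_simplex_def
    by (auto simp: matrix_vector_mult_def intro!: sum_nonneg)
  have "(\<Sum>w\<in>UNIV. (A *v x) $ w) = (\<Sum>w\<in>UNIV. \<Sum>j\<in>UNIV. A $ w $ j * x $ j)"
    by (simp add: matrix_vector_mult_def)
  also have "\<dots> = (\<Sum>j\<in>UNIV. (\<Sum>w\<in>UNIV. A $ w $ j) * x $ j)"
    by (subst sum.swap) (simp add: sum_distrib_right)
  also have "\<dots> = 1" using assms unfolding word_topic_def topic_simplex_def by simp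
  finally have "(\<integral>\<^sup>+w. ennreal ((A *v x) $ w) \<partial>count_space UNIV) = 1"
    by (subst nn_integral_count_space_finite) (auto simp: nonneg sum_ennreal)
  then show ?thesis unfolding word_dist_def by (rule pmf_embed_pmf[OF nonneg])
qed

lemma expectation_word_dist:
  assumes "word_topic A" "x \<in> topic_simplex"
  shows "measure_pmf.expectation (word_dist A x) (\<lambda>w. B $ i $ w) = ((B ** A) *v x) $ i"
proof -
  have "measure_pmf.expectation (word_dist A x) (\<lambda>w. B $ i $ w)
      = (\<Sum>w\<in>UNIV. B $ i $ w * pmf (word_dist A x) w)"
    by (simp add: integral_measure_pmf_real[of UNIV])
  also have "\<dots> = (B *v (A *v x)) $ i"
    using assms by (simp add: pmf_word_dist matrix_vector_mult_def)
  finally show ?thesis by (simp add: matrix_vector_mul_assoc)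
qed

lemma matrix_vector_mult_count_vec:
  fixes B :: "real^'d::finite^'k::finite"
  shows "(B *v count_vec n doc) $ i = (\<Sum>j<n. B $ i $ doc j)"
proof -
  have count: "real (card {j. j < n \<and> doc j = w}) = (\<Sum>j<n. if doc j = w then 1 else 0)" for w
    by (simp add: sum.If_cases Int_def conj_commute)
  have "(B *v count_vec n doc) $ i = (\<Sum>w\<in>UNIV. B $ i $ w * (\<Sum>j<n. if doc j = w then 1 else 0))"
    by (simp add: matrix_vector_mult_def count_vec_def count)
  also have "\<dots> = (\<Sum>j<n. \<Sum>w\<in>UNIV. if doc j = w then B $ i $ w else 0)"
    by (subst sum_distrib_left, subst sum.swap) (auto intro!: sum.cong)
  finally show ?thesis by simp
qed

lemma prob_Pi_pmf_sum_deviation_le: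
  fixes W :: "'a pmf" and f :: "'a \<Rightarrow> real"
  assumes "L > 0" "\<And>w. \<bar>f w\<bar> \<le> L" "n > 0" "t \<ge> 0"
  shows "measure_pmf.prob (Pi_pmf {..<n} dflt (\<lambda>_. W))
           {doc. real n * t \<le> \<bar>(\<Sum>j<n. f (doc j)) - real n * measure_pmf.expectation W f\<bar>}
         \<le> 2 * exp (- real n * t\<^sup>2 / (2 * L\<^sup>2))"
proof -
  let ?P = "Pi_pmf {..<n} dflt (\<lambda>_. W)"
  have expectation_component:
    "measure_pmf.expectation ?P (\<lambda>doc. f (doc j)) = measure_pmf.expectation W f" if "j < n" for j
  proof -
    have "map_pmf (\<lambda>doc. doc j) ?P = W" using that by (subst Pi_pmf_component) auto
    then show ?thesis by (metis integral_map_pmf)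
  qed
  have indep: "prob_space.indep_vars (measure_pmf ?P) (\<lambda>_. borel) (\<lambda>j doc. f (doc j)) {..<n}"
    using prob_space.indep_vars_compose2[OF measure_pmf.prob_space_axioms
        indep_vars_Pi_pmf[of "{..<n}" dflt "\<lambda>_. W"], of "\<lambda>_. f" "\<lambda>_. borel"]
    by simp
  interpret H: Hoeffding_ineq "measure_pmf ?P" "{..<n}" "\<lambda>j doc. f (doc j)" "\<lambda>_. -L" "\<lambda>_. L"
     "\<Sum>j<n. measure_pmf.expectation ?P (\<lambda>doc. f (doc j))"
  proof unfold_locales
    show "AE doc in measure_pmf ?P. f (doc j) \<in> {-L..L}" for j
      using assms(2) by (intro AE_I2) (metis abs_le_iff atLeastAtMost_iff minus_le_iff)
  qed (simp_all add: indep)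
  have "(\<Sum>j<n. measure_pmf.expectation ?P (\<lambda>doc. f (doc j))) = real n * measure_pmf.expectation W f"
    by (simp add: expectation_component)
  moreover have "(\<Sum>j<n. (L - - L)\<^sup>2) > 0" using assms by simp
  ultimately have "measure_pmf.prob ?P
      {doc. real n * t \<le> \<bar>(\<Sum>j<n. f (doc j)) - real n * measure_pmf.expectation W f\<bar>}
      \<le> 2 * exp (-2 * (real n * t)\<^sup>2 / (\<Sum>j<n. (L - - L)\<^sup>2))"
    using H.Hoeffding_ineq_abs_ge[of "real n * t"] assms(4) by simp
  also have "-2 * (real n * t)\<^sup>2 / (\<Sum>j<n. (L - - L)\<^sup>2) = - real n * t\<^sup>2 / (2 * L\<^sup>2)"
    using assms by (simp add: power2_eq_square field_simps)
  finally show ?thesis .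
qed

definition linear_inverse_estimate :: "nat \<Rightarrow> real^'d::finite^'k::finite \<Rightarrow> real^'d \<Rightarrow> real^'k" where
  "linear_inverse_estimate n B y = (1 / real n) *\<^sub>R (B *v y)"

lemma TLI_eq_threshold:
  fixes A :: "real^'k::finite^'d::finite"
  shows "TLI A \<delta> n y B = (\<chi> i. if linear_inverse_estimate n B y $ i
       < 2 * lambda_delta A \<delta> * sqrt (ln (real CARD('k)) / real n) + \<delta>
     then 0 else linear_inverse_estimate n B y $ i)"
  unfolding TLI_def linear_inverse_estimate_def Let_def by (rule refl)

lemma prob_estimate_deviation_le:
  fixes A :: "real^'k::finite^'d::finite"
  assumes "word_topic A" "x \<in> topic_simplex" "max_norm B \<le> L" "L > 0" "n > 0" "t \<ge> 0"
  shows "measure_pmf.prob (document n A x)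
           {doc. t \<le> \<bar>linear_inverse_estimate n B (count_vec n doc) $ i - ((B ** A) *v x) $ i\<bar>}
         \<le> 2 * exp (- real n * t\<^sup>2 / (2 * L\<^sup>2))"
proof -
  have "t \<le> \<bar>linear_inverse_estimate n B (count_vec n doc) $ i - ((B ** A) *v x) $ i\<bar>
    \<longleftrightarrow> real n * t \<le> \<bar>(\<Sum>j<n. B $ i $ doc j) - real n * ((B ** A) *v x) $ i\<bar>" for doc
  proof -
    have "linear_inverse_estimate n B (count_vec n doc) $ i - ((B ** A) *v x) $ i
        = ((\<Sum>j<n. B $ i $ doc j) - real n * ((B ** A) *v x) $ i) / real n"
      using assms(5) by (simp add: linear_inverse_estimate_def matrix_vector_mult_count_vec field_simps)
    then show ?thesis using assms(5) by (simp add: abs_divide le_divide_eq mult.commute)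
  qed
  moreover have "\<bar>B $ i $ w\<bar> \<le> L" for w
    using abs_entry_le_max_norm[of B i w] assms(3) by linarith
  ultimately show ?thesis
    using prob_Pi_pmf_sum_deviation_le[of L "\<lambda>w. B $ i $ w" n t undefined "word_dist A x"] assms
    by (simp add: document_def expectation_word_dist)
qed

lemma prob_estimate_uniformly_close:
  fixes A :: "real^'k::finite^'d::finite" and B :: "real^'d^'k"
  assumes "word_topic A" "x \<in> topic_simplex" "max_norm B \<le> L" "L > 0" "n > 0"
  defines "t \<equiv> 2 * L * sqrt (ln (real CARD('k)) / real n)"
  shows "measure_pmf.prob (document n A x)
           {doc. \<forall>i. \<bar>linear_inverse_estimate n B (count_vec n doc) $ i - ((B ** A) *v x) $ i\<bar> < t}
         \<ge> 1 - 2 / real CARD('k)"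
proof -
  let ?P = "document n A x" and ?k = "real CARD('k)"
  define Bad where "Bad i = {doc.
    t \<le> \<bar>linear_inverse_estimate n B (count_vec n doc) $ i - ((B ** A) *v x) $ i\<bar>}" for i
  have "t\<^sup>2 = 4 * L\<^sup>2 * ln ?k / real n"
    unfolding t_def by (simp add: power_mult_distrib)
  then have "- real n * t\<^sup>2 / (2 * L\<^sup>2) = - 2 * ln ?k"
    using assms(4,5) by (simp add: field_simps power2_eq_square)
  moreover have "exp (- 2 * ln ?k) = 1 / ?k\<^sup>2"
  proof -
    have "2 * ln ?k = ln (?k\<^sup>2)" by (simp add: ln_realpow)
    then show ?thesis by (simp add: exp_minus inverse_eq_divide)
  qed
  ultimately have "2 * exp (- real n * t\<^sup>2 / (2 * L\<^sup>2)) = 2 / ?k\<^sup>2"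
    by (simp add: inverse_eq_divide)
  then have bad: "measure_pmf.prob ?P (Bad i) \<le> 2 / ?k\<^sup>2" for i
    using prob_estimate_deviation_le[OF assms(1-5), of t i] assms(4) by (simp add: Bad_def t_def)
  have "measure_pmf.prob ?P (\<Union>i. Bad i) \<le> (\<Sum>i\<in>UNIV. measure_pmf.prob ?P (Bad i))"
    by (rule measure_pmf.finite_measure_subadditive_finite) auto
  also have "\<dots> \<le> (\<Sum>i\<in>(UNIV::'k set). 2 / ?k\<^sup>2)" by (intro sum_mono bad)
  also have "\<dots> = 2 / ?k" by (simp add: power2_eq_square)
  finally have "measure_pmf.prob ?P (\<Union>i. Bad i) \<le> 2 / ?k" .
  moreover have "{doc. \<forall>i. \<bar>linear_inverse_estimate n B (count_vec n doc) $ i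
      - ((B ** A) *v x) $ i\<bar> < t} = UNIV - (\<Union>i. Bad i)"
    by (auto simp: Bad_def not_le) (meson leD)
  ultimately show ?thesis
    using measure_pmf.prob_compl[of "\<Union>i. Bad i" ?P] by simp
qed

lemma biased_inverse_error_le:
  fixes C :: "real^'k::finite^'k" and x :: "real^'k"
  assumes "max_norm (C - mat 1) \<le> \<delta>" "x \<in> topic_simplex"
  shows "\<bar>(C *v x) $ i - x $ i\<bar> \<le> \<delta>"
proof -
  have "(C *v x) $ i - x $ i = ((C - mat 1) *v x) $ i"
    by (simp add: matrix_vector_mult_diff_rdistrib)
  then have "\<bar>(C *v x) $ i - x $ i\<bar> = \<bar>\<Sum>j\<in>UNIV. (C - mat 1) $ i $ j * x $ j\<bar>"
    by (simp add: matrix_vector_mult_def)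
  also have "\<dots> \<le> (\<Sum>j\<in>UNIV. \<bar>(C - mat 1) $ i $ j\<bar> * x $ j)"
    using assms(2) by (auto simp: topic_simplex_def abs_mult intro: order.trans[OF sum_abs])
  also have "\<dots> \<le> (\<Sum>j\<in>UNIV. \<delta> * x $ j)"
    using assms(2)
    by (intro sum_mono mult_right_mono order.trans[OF abs_entry_le_max_norm assms(1)])
      (auto simp: topic_simplex_def)
  also have "\<dots> = \<delta>" using assms(2) by (simp add: topic_simplex_def flip: sum_distrib_left)
  finally show ?thesis .
qed

lemma threshold_l1_error_le:
  fixes xh m x :: "real^'k::finite"
  assumes "\<And>i. \<bar>xh $ i - m $ i\<bar> < t" "\<And>i. \<bar>m $ i - x $ i\<bar> \<le> \<delta>"
    and "\<And>i. x $ i \<ge> 0" "sparse r x" "2 * real r * (t + \<delta>) \<le> \<epsilon>"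
  shows "l1_norm ((\<chi> i. if xh $ i < t + \<delta> then 0 else xh $ i) - x) \<le> \<epsilon>"
proof -
  let ?x = "(\<chi> i. if xh $ i < t + \<delta> then 0 else xh $ i) :: real^'k"
  let ?S = "{i. x $ i \<noteq> 0}"
  have off_support: "\<bar>?x $ i - x $ i\<bar> = 0" if "i \<notin> ?S" for i
    using assms(1,2)[of i] that by auto
  have "\<bar>?x $ i - x $ i\<bar> \<le> 2 * (t + \<delta>)" for i
    using assms(1-3)[of i] by (auto simp: abs_le_iff abs_less_iff)
  then have "l1_norm (?x - x) \<le> real (card ?S) * (2 * (t + \<delta>))"
    using sum.mono_neutral_right[of UNIV ?S "\<lambda>i. \<bar>?x $ i - x $ i\<bar>"] off_support
      sum_bounded_above[of ?S "\<lambda>i. \<bar>?x $ i - x $ i\<bar>"]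
    by (simp add: l1_norm_def)
  also have "\<dots> \<le> real r * (2 * (t + \<delta>))"
    using assms(1,2)[of undefined] assms(4)
    by (intro mult_right_mono) (auto simp: sparse_def)
  finally show ?thesis using assms(5) by (simp add: mult_ac)
qed

lemma threshold_le_of_sample_size:
  fixes L \<delta> \<epsilon> r n c :: real
  assumes "\<epsilon> > 4 * \<delta> * r" "n \<ge> 64 * L\<^sup>2 * r\<^sup>2 * c / \<epsilon>\<^sup>2"
    and "\<epsilon> > 0" "n > 0" "L \<ge> 0" "r \<ge> 0" "c \<ge> 0"
  shows "2 * r * (2 * L * sqrt (c / n) + \<delta>) \<le> \<epsilon>"
proof -
  let ?t = "2 * L * sqrt (c / n)"
  have "(4 * r * ?t)\<^sup>2 = 64 * L\<^sup>2 * r\<^sup>2 * c / n"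
    using assms by (simp add: power_mult_distrib)
  also have "\<dots> \<le> \<epsilon>\<^sup>2"
    using assms(2-4) by (simp add: divide_le_eq pos_divide_le_eq mult.commute)
  finally have "4 * r * ?t \<le> \<epsilon>"
    using assms(3) by (rule power2_le_imp_le[OF _ less_imp_le])
  then show ?thesis using assms(1) by (simp add: algebra_simps)
qed

text \<open>Hoeffding's inequality needs \<open>\<lambda>\<^sub>\<delta>(A) > 0\<close>; the case \<open>\<lambda>\<^sub>\<delta>(A) = 0\<close> forces \<open>B = 0\<close>
  and \<open>\<delta> \<ge> 1\<close>, where the output \<open>0\<close> is already \<open>\<epsilon>\<close>-close.\<close>

lemma TLI_l1_error_le_degenerate:
  fixes A :: "real^'k::finite^'d::finite"
  assumes "min_var_inverse A \<delta> B" "lambda_delta A \<delta> = 0"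
    and "x \<in> topic_simplex" "sparse r x" "\<epsilon> > 4 * \<delta> * real r"
  shows "l1_norm (TLI A \<delta> n y B - x) \<le> \<epsilon>"
proof -
  have "\<bar>B $ i $ w\<bar> \<le> 0" for i w
    using assms(1,2) abs_entry_le_max_norm[of B i w] by (simp add: min_var_inverse_def)
  then have B0: "B = 0" by (simp add: vec_eq_iff)
  then have "\<bar>(B ** A - mat 1) $ i $ i\<bar> = 1" for i by (simp add: mat_def)
  then have "\<delta> \<ge> 1"
    using assms(1) abs_entry_le_max_norm[of "B ** A - mat 1" undefined undefined]
    by (simp add: min_var_inverse_def)
  moreover have "real r \<ge> 1" using sparse_simplex_ge_1[OF assms(3,4)] by simp
  ultimately have "\<epsilon> \<ge> 1" using assms(5) mult_mono[of 1 \<delta> 1 "real r"] by linarith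
  moreover have "TLI A \<delta> n y B = 0"
    using \<open>\<delta> \<ge> 1\<close> by (simp add: TLI_eq_threshold assms(2) B0 linear_inverse_estimate_def vec_eq_iff)
  moreover have "l1_norm (0 - x) = 1"
    using assms(3) by (simp add: l1_norm_def topic_simplex_def)
  ultimately show ?thesis by simp
qed

theorem theorem4p1:
  fixes A :: "real^'k::finite^'d::finite"
    and B :: "real^'d^'k"
    and xs :: "real^'k"
    and \<delta> \<epsilon> :: real and r n :: nat
  assumes "word_topic A"
    and "\<delta> \<ge> 0"
    and "min_var_inverse A \<delta> B"
    and "xs \<in> topic_simplex"
    and "sparse r xs"
    and "\<epsilon> > 4 * \<delta> * real r"
    and "real n \<ge> 64 * (lambda_delta A \<delta>)^2 * (real r)^2 * ln (real CARD('k)) / \<epsilon>^2"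
  shows "measure_pmf.prob (document n A xs)
           {doc. l1_norm (TLI A \<delta> n (count_vec n doc) B - xs) \<le> \<epsilon>}
         \<ge> 1 - 2 / real CARD('k)"
proof -
  let ?P = "document n A xs" and ?k = "real CARD('k)" and ?L = "lambda_delta A \<delta>"
  let ?G = "{doc. l1_norm (TLI A \<delta> n (count_vec n doc) B - xs) \<le> \<epsilon>}"
  let ?t = "2 * ?L * sqrt (ln ?k / real n)"
  have L_nonneg: "?L \<ge> 0"
    using assms(3) abs_entry_le_max_norm[of B] by (metis min_var_inverse_def abs_ge_zero order_trans)
  have \<epsilon>_pos: "\<epsilon> > 0" using assms(2,6) mult_nonneg_nonneg[of "4 * \<delta>" "real r"] by linarith
  consider "?k \<le> 2" | "?L = 0" | "?k > 2" "?L > 0" using L_nonneg by linarith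
  then show ?thesis
  proof cases
    case 1
    then have "1 - 2 / ?k \<le> 0" by (simp add: field_simps)
    then show ?thesis using measure_nonneg[of ?P ?G] by linarith
  next
    case 2
    then have "?G = UNIV" using TLI_l1_error_le_degenerate[OF assms(3) _ assms(4-6)] by auto
    then show ?thesis by (simp add: measure_pmf.prob_space)
  next
    case 3
    have "64 * ?L\<^sup>2 * (real r)\<^sup>2 * ln ?k / \<epsilon>\<^sup>2 > 0"
      using 3 \<epsilon>_pos sparse_simplex_ge_1[OF assms(4,5)] by (intro divide_pos_pos mult_pos_pos) auto
    then have n_pos: "real n > 0" using assms(7) by linarith
    have size: "2 * real r * (?t + \<delta>) \<le> \<epsilon>"
      using threshold_le_of_sample_size[OF assms(6,7) \<epsilon>_pos n_pos L_nonneg] 3 by simp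
    let ?Close = "{doc. \<forall>i. \<bar>linear_inverse_estimate n B (count_vec n doc) $ i
      - ((B ** A) *v xs) $ i\<bar> < ?t}"
    have bias: "\<bar>((B ** A) *v xs) $ i - xs $ i\<bar> \<le> \<delta>" for i
      using biased_inverse_error_le[OF _ assms(4)] assms(3) by (simp add: min_var_inverse_def)
    have nonneg: "xs $ i \<ge> 0" for i using assms(4) by (simp add: topic_simplex_def)
    have "?Close \<subseteq> ?G"
      using threshold_l1_error_le[OF _ bias nonneg assms(5) size] by (auto simp: TLI_eq_threshold)
    then have "measure_pmf.prob ?P ?Close \<le> measure_pmf.prob ?P ?G"
      by (intro measure_pmf.finite_measure_mono) simp_all
    moreover have "max_norm B \<le> ?L" using assms(3) by (simp add: min_var_inverse_def)
    with 3 n_pos have "measure_pmf.prob ?P ?Close \<ge> 1 - 2 / ?k"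
      by (intro prob_estimate_uniformly_close[OF assms(1,4)]) simp_all
    ultimately show ?thesis by linarith
  qed
qed

end
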